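(* Let $I$ be an instance of 3-SAT$^*$ with 1-in-3-clauses $C_0,\dots,C_{m-1}$, 2-in-3-clauses $C_m,\dots,C_{2m-1}$ and variables $x_0,\dots,x_{n-1}$, and let $\kappa:[n]\times[4]\to[2m]\times[3]$ be the bijection mapping $(j,t)$ to the (clause index, position in that clause) of the first ($t=0$) or second ($t=1$) positive occurrence of $x_j$, or of the first ($t=2$) or second ($t=3$) negative occurrence of $x_j$. Construct the restricted assignment instance $I'$ as follows. Machines: truth assignment machines $\mathtt{TMach}(j,q)$ for $j\in[n],q\in[2]$, and clause machines $\mathtt{CMach}(i,s)$ for $i\in[2m],s\in[3]$. Jobs: (i) for each $j\in[n]$ a truth assignment job $\mathtt{TJob}(j)$ of size $2$ eligible on $\{\mathtt{TMach}(j,0),\mathtt{TMach}(j,1)\}$; (ii) for each $i\in[2m]$ and $s\in[3]$ a clause job $\mathtt{CJob}(i,s)$ eligible on $\{\mathtt{CMach}(i,s'):s'\in[3]\}$, where $\mathtt{CJob}(i,0)$ has size $1$, $\mathtt{CJob}(i,2)$ has size $2$, and $\mathtt{CJob}(i,1)$ has size $2$ if $C_i$ is a 1-in-3-clause and size $1$ otherwise; (iii) for each $j\in[n]$, $t\in[4]$ a variable job $\mathtt{VJob}(j,t)$ of size $1$ eligible on $\{\mathtt{TMach}(j,\lfloor t/2\rfloor),\mathtt{CMach}(\kappa(j,t))\}$. Then there is a satisfying truth assignment for $I$ if and only if there is a schedule of makespan $2$ for $I'$.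
   Context: Notation: $[k]=\{0,\dots,k-1\}$. A 3-SAT$^*$ instance is a conjunction of clauses each with exactly 3 literals, each clause being either a 1-in-3-clause (satisfied iff exactly one of its literals is true) or a 2-in-3-clause (satisfied iff exactly two of its literals are true); there are equally many 1-in-3- and 2-in-3-clauses, and each literal ($x_j$ and $\neg x_j$ for every variable) occurs exactly twice. Restricted assignment: each job has a size and a set of eligible machines, a schedule assigns each job to an eligible machine, and the makespan is the maximum total size assigned to a machine. *)

theory Defs
  imports Main
begin

text \<open>An instance with variables x_0..x_{n-1} and clauses C_0..C_{2m-1}.
  lit i s = (j, b): the literal at position s of clause C_i is x_j if b, and not x_j otherwise.\<close>

definition occurrences :: "(nat \<Rightarrow> nat \<Rightarrow> nat \<times> bool) \<Rightarrow> nat \<Rightarrow> nat \<times> bool \<Rightarrow> (nat \<times> nat) set" where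
  "occurrences lit m l = {(i, s). i < 2 * m \<and> s < 3 \<and> lit i s = l}"

definition sat3_star_instance :: "nat \<Rightarrow> nat \<Rightarrow> (nat \<Rightarrow> nat \<Rightarrow> nat \<times> bool) \<Rightarrow> bool" where
  "sat3_star_instance n m lit \<longleftrightarrow>
     (\<forall>i < 2 * m. \<forall>s < 3. fst (lit i s) < n) \<and>
     (\<forall>j < n. \<forall>b. card (occurrences lit m (j, b)) = 2)"

definition lit_true :: "(nat \<Rightarrow> bool) \<Rightarrow> nat \<times> bool \<Rightarrow> bool" where
  "lit_true \<alpha> l \<longleftrightarrow> \<alpha> (fst l) = snd l"

definition num_true :: "(nat \<Rightarrow> nat \<Rightarrow> nat \<times> bool) \<Rightarrow> (nat \<Rightarrow> bool) \<Rightarrow> nat \<Rightarrow> nat" where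
  "num_true lit \<alpha> i = card {s. s < 3 \<and> lit_true \<alpha> (lit i s)}"

definition satisfies :: "nat \<Rightarrow> (nat \<Rightarrow> nat \<Rightarrow> nat \<times> bool) \<Rightarrow> (nat \<Rightarrow> bool) \<Rightarrow> bool" where
  "satisfies m lit \<alpha> \<longleftrightarrow>
     (\<forall>i < m. num_true lit \<alpha> i = 1) \<and> (\<forall>i. m \<le> i \<and> i < 2 * m \<longrightarrow> num_true lit \<alpha> i = 2)"

text \<open>Occurrence positions are ordered by (clause index, position), i.e. by 3i+s.\<close>
definition pos_index :: "nat \<times> nat \<Rightarrow> nat" where
  "pos_index p = 3 * fst p + snd p"

definition is_kappa :: "nat \<Rightarrow> nat \<Rightarrow> (nat \<Rightarrow> nat \<Rightarrow> nat \<times> bool) \<Rightarrow> (nat \<Rightarrow> nat \<Rightarrow> nat \<times> nat) \<Rightarrow> bool" where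
  "is_kappa n m lit \<kappa> \<longleftrightarrow>
     bij_betw (\<lambda>(j, t). \<kappa> j t) ({..<n} \<times> {..<4}) ({..<2 * m} \<times> {..<3}) \<and>
     (\<forall>j < n. \<forall>t < 4. lit (fst (\<kappa> j t)) (snd (\<kappa> j t)) = (j, t < 2)) \<and>
     (\<forall>j < n. pos_index (\<kappa> j 0) < pos_index (\<kappa> j 1) \<and> pos_index (\<kappa> j 2) < pos_index (\<kappa> j 3))"

definition load :: "'j set \<Rightarrow> ('j \<Rightarrow> nat) \<Rightarrow> ('j \<Rightarrow> 'm) \<Rightarrow> 'm \<Rightarrow> nat" where
  "load J p \<sigma> i = (\<Sum>j\<in>{j\<in>J. \<sigma> j = i}. p j)"

definition is_schedule :: "'j set \<Rightarrow> ('j \<Rightarrow> 'm set) \<Rightarrow> ('j \<Rightarrow> 'm) \<Rightarrow> bool" where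
  "is_schedule J elig \<sigma> \<longleftrightarrow> (\<forall>j\<in>J. \<sigma> j \<in> elig j)"

definition makespan :: "'m set \<Rightarrow> 'j set \<Rightarrow> ('j \<Rightarrow> nat) \<Rightarrow> ('j \<Rightarrow> 'm) \<Rightarrow> nat" where
  "makespan M J p \<sigma> = Max (insert 0 (load J p \<sigma> ` M))"

datatype mach = TMach nat nat | CMach nat nat
datatype job = TJob nat | CJob nat nat | VJob nat nat

definition red_machines :: "nat \<Rightarrow> nat \<Rightarrow> mach set" where
  "red_machines n m = {TMach j q | j q. j < n \<and> q < 2} \<union> {CMach i s | i s. i < 2 * m \<and> s < 3}"

definition red_jobs :: "nat \<Rightarrow> nat \<Rightarrow> job set" where
  "red_jobs n m = {TJob j | j. j < n} \<union> {CJob i s | i s. i < 2 * m \<and> s < 3}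
                  \<union> {VJob j t | j t. j < n \<and> t < 4}"

fun red_size :: "nat \<Rightarrow> job \<Rightarrow> nat" where
  "red_size m (TJob j) = 2"
| "red_size m (CJob i s) = (if s = 0 then 1 else if s = 2 then 2 else (if i < m then 2 else 1))"
| "red_size m (VJob j t) = 1"

fun red_elig :: "(nat \<Rightarrow> nat \<Rightarrow> nat \<times> nat) \<Rightarrow> job \<Rightarrow> mach set" where
  "red_elig \<kappa> (TJob j) = {TMach j 0, TMach j 1}"
| "red_elig \<kappa> (CJob i s) = {CMach i s' | s'. s' < 3}"
| "red_elig \<kappa> (VJob j t) = {TMach j (t div 2), CMach (fst (\<kappa> j t)) (snd (\<kappa> j t))}"

end

theory Submission
  imports Defs
begin

text \<open>Given a satisfying assignment, put TJob(j) on the truth-assignment machine of the value of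
  x_j: the variable jobs of the true occurrences then go to their clause machines, those of the
  false occurrences to the other truth-assignment machine of their variable. A 1-in-3-clause
  needs one true position and has one clause job of size 1, a 2-in-3-clause needs two and has
  two, so within each clause the clause jobs can be permuted onto the clause machines with the
  size-1 jobs exactly on the true positions.

  Conversely, read x_j off the machine of TJob(j). Then the variable job of every true occurrence
  sits on its clause machine, so the three machines of a clause with demand d (1 or 2) carry
  clause jobs of total size 6 - d plus one unit per true position: at most d positions are true.
  Each variable has exactly two true occurrences, so there are 2n = 3m true positions in total,
  which is the total demand; hence every clause meets its demand exactly.\<close>

lemma is_scheduleD: "is_schedule J elig \<sigma> \<Longrightarrow> x \<in> J \<Longrightarrow> \<sigma> x \<in> elig x"
  unfolding is_schedule_def by blast

lemma makespan_le_iff: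
  assumes "finite M"
  shows "makespan M J p \<sigma> \<le> c \<longleftrightarrow> (\<forall>k\<in>M. load J p \<sigma> k \<le> c)"
  using assms unfolding makespan_def by auto

lemma load_le_sum:
  assumes "finite B" "{x\<in>J. \<sigma> x = k} \<subseteq> B"
  shows "load J p \<sigma> k \<le> sum p B"
  unfolding load_def using assms by (rule sum_mono2) auto

lemma load_ge_two_jobs:
  assumes "finite J" "x \<in> J" "y \<in> J" "x \<noteq> y" "\<sigma> x = k" "\<sigma> y = k"
  shows "p x + p y \<le> load J p \<sigma> k"
proof -
  have "p x + p y = sum p {x, y}" using assms(4) by simp
  also have "\<dots> \<le> load J p \<sigma> k"
    unfolding load_def by (rule sum_mono2) (use assms in auto)
  finally show ?thesis .
qed

lemma sum_load:
  assumes "finite J" "finite K"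
  shows "(\<Sum>k\<in>K. load J p \<sigma> k) = sum p {x\<in>J. \<sigma> x \<in> K}"
proof -
  have "(\<Sum>k\<in>K. load J p \<sigma> k) = (\<Sum>k\<in>K. sum p {x. x \<in> {x\<in>J. \<sigma> x \<in> K} \<and> \<sigma> x = k})"
    unfolding load_def by (intro sum.cong) auto
  also have "\<dots> = sum p {x\<in>J. \<sigma> x \<in> K}"
    using assms by (intro sum.group) auto
  finally show ?thesis .
qed

lemma sum_le_card_mult_load_bound:
  assumes "finite J" "finite K" "X \<subseteq> J" "\<sigma> ` X \<subseteq> K" "\<forall>k\<in>K. load J p \<sigma> k \<le> c"
  shows "sum p X \<le> card K * c"
proof -
  have "sum p X \<le> sum p {x\<in>J. \<sigma> x \<in> K}"
    using assms by (intro sum_mono2) auto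
  also have "\<dots> = (\<Sum>k\<in>K. load J p \<sigma> k)"
    using assms by (simp add: sum_load)
  also have "\<dots> \<le> card K * c"
    using assms(5) sum_bounded_above[of K "load J p \<sigma>" c] by simp
  finally show ?thesis .
qed

lemma bij_betw_respecting_subsets:
  assumes "finite A" "finite B" "card A = card B"
    and "A' \<subseteq> A" "B' \<subseteq> B" "card A' = card B'"
  obtains f where "bij_betw f A B" "\<And>a. a \<in> A \<Longrightarrow> f a \<in> B' \<longleftrightarrow> a \<in> A'"
proof -
  have fin: "finite A'" "finite B'" using assms finite_subset by auto
  obtain g where g: "bij_betw g A' B'"
    using finite_same_card_bij[OF fin assms(6)] by blast
  have "card (A - A') = card (B - B')"
    using assms fin by (simp add: card_Diff_subset)
  then obtain h where h: "bij_betw h (A - A') (B - B')"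
    using finite_same_card_bij assms(1,2) by blast
  define f where "f a = (if a \<in> A' then g a else h a)" for a
  have "bij_betw f A' B'" using g by (rule bij_betw_cong[THEN iffD1, rotated]) (simp add: f_def)
  moreover have "bij_betw f (A - A') (B - B')"
    using h by (rule bij_betw_cong[THEN iffD1, rotated]) (simp add: f_def)
  ultimately have "bij_betw f (A' \<union> (A - A')) (B' \<union> (B - B'))"
    by (rule bij_betw_combine) auto
  then have "bij_betw f A B" using assms(4,5) by (simp add: Un_absorb1)
  moreover have "f a \<in> B' \<longleftrightarrow> a \<in> A'" if "a \<in> A" for a
    using that g h unfolding f_def bij_betw_def by auto
  ultimately show ?thesis by (rule that)
qed

lemma TMach_in_red_machines [simp]: "TMach j q \<in> red_machines n m \<longleftrightarrow> j < n \<and> q < 2"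
  and CMach_in_red_machines [simp]: "CMach i s \<in> red_machines n m \<longleftrightarrow> i < 2 * m \<and> s < 3"
  unfolding red_machines_def by auto

lemma TJob_in_red_jobs [simp]: "TJob j \<in> red_jobs n m \<longleftrightarrow> j < n"
  and CJob_in_red_jobs [simp]: "CJob i s \<in> red_jobs n m \<longleftrightarrow> i < 2 * m \<and> s < 3"
  and VJob_in_red_jobs [simp]: "VJob j t \<in> red_jobs n m \<longleftrightarrow> j < n \<and> t < 4"
  unfolding red_jobs_def by auto

lemma finite_red_machines: "finite (red_machines n m)"
proof -
  have "red_machines n m
      = case_prod TMach ` ({..<n} \<times> {..<2}) \<union> case_prod CMach ` ({..<2 * m} \<times> {..<3})"
    unfolding red_machines_def by auto
  then show ?thesis by simp
qed

lemma finite_red_jobs: "finite (red_jobs n m)"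
proof -
  have "red_jobs n m = TJob ` {..<n} \<union> case_prod CJob ` ({..<2 * m} \<times> {..<3})
      \<union> case_prod VJob ` ({..<n} \<times> {..<4})"
    unfolding red_jobs_def by auto
  then show ?thesis by simp
qed

definition clause_demand :: "nat \<Rightarrow> nat \<Rightarrow> nat" where
  "clause_demand m i = (if i < m then 1 else 2)"

lemma satisfies_iff_clause_demand:
  "satisfies m lit \<alpha> \<longleftrightarrow> (\<forall>i < 2 * m. num_true lit \<alpha> i = clause_demand m i)"
  unfolding satisfies_def clause_demand_def by fastforce

lemma sum_clause_demand: "(\<Sum>i<2 * m. clause_demand m i) = 3 * m"
proof -
  have "(\<Sum>i<2 * m. clause_demand m i)
      = (\<Sum>i<m. clause_demand m i) + (\<Sum>i=m..<2 * m. clause_demand m i)"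
    by (simp add: lessThan_atLeast0 sum.atLeastLessThan_concat)
  also have "\<dots> = (\<Sum>i<m. 1) + (\<Sum>i=m..<2 * m. 2)"
    unfolding clause_demand_def by (intro arg_cong2[where f = "(+)"] sum.cong) auto
  finally show ?thesis by simp
qed

lemma card_small_clause_jobs: "card {s. s < 3 \<and> red_size m (CJob i s) = 1} = clause_demand m i"
proof -
  have "{s. s < 3 \<and> red_size m (CJob i s) = 1} = (if i < m then {0} else {0, 1})"
    by auto
  then show ?thesis by (simp add: clause_demand_def)
qed

lemma sum_red_size_CJob: "(\<Sum>s<3. red_size m (CJob i s)) + clause_demand m i = 6"
  by (simp add: numeral_3_eq_3 clause_demand_def)

locale occurrence_map =
  fixes n m :: nat and lit :: "nat \<Rightarrow> nat \<Rightarrow> nat \<times> bool" and \<kappa> :: "nat \<Rightarrow> nat \<Rightarrow> nat \<times> nat"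
  assumes is_kappa: "is_kappa n m lit \<kappa>"
begin

lemma kappa_bij: "bij_betw (\<lambda>(j, t). \<kappa> j t) ({..<n} \<times> {..<4}) ({..<2 * m} \<times> {..<3})"
  using is_kappa unfolding is_kappa_def by blast

lemma lit_kappa: "j < n \<Longrightarrow> t < 4 \<Longrightarrow> lit (fst (\<kappa> j t)) (snd (\<kappa> j t)) = (j, t < 2)"
  using is_kappa unfolding is_kappa_def by blast

lemma lit_true_kappa:
  "j < n \<Longrightarrow> t < 4 \<Longrightarrow>
    lit_true \<alpha> (lit (fst (\<kappa> j t)) (snd (\<kappa> j t))) \<longleftrightarrow> \<alpha> j = (t < 2)"
  by (simp add: lit_kappa lit_true_def)

lemma kappa_in_range:
  assumes "j < n" "t < 4"
  shows "fst (\<kappa> j t) < 2 * m \<and> snd (\<kappa> j t) < 3"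
  using bij_betwE[OF kappa_bij, rule_format, of "(j, t)"] assms by (simp add: mem_Times_iff)

lemma kappa_inj:
  "j < n \<Longrightarrow> t < 4 \<Longrightarrow> j' < n \<Longrightarrow> t' < 4 \<Longrightarrow> \<kappa> j t = \<kappa> j' t' \<Longrightarrow> j = j' \<and> t = t'"
  using bij_betw_imp_inj_on[OF kappa_bij] unfolding inj_on_def by fastforce

lemma kappa_surj:
  assumes "i < 2 * m" "s < 3"
  obtains j t where "j < n" "t < 4" "\<kappa> j t = (i, s)"
proof -
  have "(i, s) \<in> (\<lambda>(j, t). \<kappa> j t) ` ({..<n} \<times> {..<4})"
    using assms bij_betw_imp_surj_on[OF kappa_bij] by auto
  then show ?thesis using that by auto
qed

lemma two_n_eq_three_m: "2 * n = 3 * m"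
  using bij_betw_same_card[OF kappa_bij] by simp

lemma bij_betw_true_occurrences:
  "bij_betw (\<lambda>(j, t). \<kappa> j t) {(j, t). j < n \<and> t < 4 \<and> \<alpha> j = (t < 2) \<and> P (\<kappa> j t)}
     {(i, s). i < 2 * m \<and> s < 3 \<and> lit_true \<alpha> (lit i s) \<and> P (i, s)}"
  (is "bij_betw ?\<kappa> ?Occ ?Pos")
proof (rule bij_betw_subset[OF kappa_bij])
  show "?\<kappa> ` ?Occ = ?Pos"
  proof (intro equalityI subsetI)
    fix p assume "p \<in> ?\<kappa> ` ?Occ"
    then obtain j t where jt: "j < n" "t < 4" "\<alpha> j = (t < 2)" "P (\<kappa> j t)" "p = \<kappa> j t"
      by auto
    then have "fst p < 2 * m" "snd p < 3" "lit_true \<alpha> (lit (fst p) (snd p))" "P p"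
      using kappa_in_range lit_true_kappa by auto
    then show "p \<in> ?Pos"
      by (cases p) auto
  next
    fix p assume "p \<in> ?Pos"
    then obtain i s where p: "p = (i, s)" "i < 2 * m" "s < 3" "lit_true \<alpha> (lit i s)" "P (i, s)"
      by auto
    then obtain j t where "j < n" "t < 4" "\<kappa> j t = (i, s)" by (auto elim: kappa_surj)
    moreover have "\<alpha> j = (t < 2)" using lit_true_kappa[of j t \<alpha>] calculation p by simp
    ultimately show "p \<in> ?\<kappa> ` ?Occ"
      using p by (auto intro!: image_eqI[where x = "(j, t)"])
  qed
qed auto

lemma sum_num_true: "(\<Sum>i<2 * m. num_true lit \<alpha> i) = 2 * n"
proof -
  have "(\<Sum>i<2 * m. num_true lit \<alpha> i) = card (SIGMA i:{..<2 * m}. {s. s < 3 \<and> lit_true \<alpha> (lit i s)})"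
    unfolding num_true_def by simp
  also have "(SIGMA i:{..<2 * m}. {s. s < 3 \<and> lit_true \<alpha> (lit i s)})
      = {(i, s). i < 2 * m \<and> s < 3 \<and> lit_true \<alpha> (lit i s)}"
    by auto
  also have "card \<dots> = card {(j, t). j < n \<and> t < 4 \<and> \<alpha> j = (t < (2::nat))}"
    using bij_betw_same_card[OF bij_betw_true_occurrences[where P = "\<lambda>_. True"]] by simp
  also have "{(j, t). j < n \<and> t < 4 \<and> \<alpha> j = (t < (2::nat))} = (SIGMA j:{..<n}. {t. t < 4 \<and> \<alpha> j = (t < 2)})"
    by auto
  also have "card \<dots> = (\<Sum>j<n. card {t. t < 4 \<and> \<alpha> j = (t < (2::nat))})"
    by (simp add: card_SigmaI)
  also have "\<dots> = (\<Sum>j<n. 2)"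
  proof (intro sum.cong refl)
    fix j
    have "{t. t < 4 \<and> \<alpha> j = (t < (2::nat))} = (if \<alpha> j then {0, 1} else {2, 3})"
      by auto
    then show "card {t. t < 4 \<and> \<alpha> j = (t < (2::nat))} = 2" by simp
  qed
  finally show ?thesis by simp
qed

lemma card_true_occurrences_in_clause:
  "card {(j, t). j < n \<and> t < 4 \<and> \<alpha> j = (t < 2) \<and> fst (\<kappa> j t) = i} = num_true lit \<alpha> i"
  if "i < 2 * m"
proof -
  have "card {(j, t). j < n \<and> t < 4 \<and> \<alpha> j = (t < 2) \<and> fst (\<kappa> j t) = i}
      = card {(i', s). i' < 2 * m \<and> s < 3 \<and> lit_true \<alpha> (lit i' s) \<and> i' = i}"
    using bij_betw_same_card[OF bij_betw_true_occurrences[where P = "\<lambda>p. fst p = i"]] by simp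
  also have "{(i', s). i' < 2 * m \<and> s < 3 \<and> lit_true \<alpha> (lit i' s) \<and> i' = i}
      = Pair i ` {s. s < 3 \<and> lit_true \<alpha> (lit i s)}"
    using that by auto
  also have "card \<dots> = num_true lit \<alpha> i"
    unfolding num_true_def by (simp add: card_image inj_on_def)
  finally show ?thesis .
qed

lemma satisfies_iff_num_true_le:
  "satisfies m lit \<alpha> \<longleftrightarrow> (\<forall>i < 2 * m. num_true lit \<alpha> i \<le> clause_demand m i)"
proof
  assume le: "\<forall>i < 2 * m. num_true lit \<alpha> i \<le> clause_demand m i"
  have "(\<Sum>i<2 * m. num_true lit \<alpha> i) = (\<Sum>i<2 * m. clause_demand m i)"
    using sum_num_true sum_clause_demand two_n_eq_three_m by simp
  then show "satisfies m lit \<alpha>"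
    unfolding satisfies_iff_clause_demand using le by (auto intro: sum_mono_inv)
qed (simp add: satisfies_iff_clause_demand)

definition truth_schedule :: "(nat \<Rightarrow> bool) \<Rightarrow> (nat \<Rightarrow> nat \<Rightarrow> nat) \<Rightarrow> job \<Rightarrow> mach" where
  "truth_schedule \<alpha> \<pi> x = (case x of
      TJob j \<Rightarrow> TMach j (if \<alpha> j then 0 else 1)
    | CJob i s \<Rightarrow> CMach i (\<pi> i s)
    | VJob j t \<Rightarrow>
        if \<alpha> j = (t < 2) then CMach (fst (\<kappa> j t)) (snd (\<kappa> j t)) else TMach j (t div 2))"

lemma is_schedule_truth_schedule:
  assumes "\<forall>i < 2 * m. \<forall>s < 3. \<pi> i s < 3"
  shows "is_schedule (red_jobs n m) (red_elig \<kappa>) (truth_schedule \<alpha> \<pi>)"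
  unfolding is_schedule_def
proof
  fix x assume "x \<in> red_jobs n m"
  then show "truth_schedule \<alpha> \<pi> x \<in> red_elig \<kappa> x"
    using assms by (cases x) (auto simp: truth_schedule_def)
qed

lemma load_TMach_truth_schedule:
  assumes "q < 2"
  shows "load (red_jobs n m) (red_size m) (truth_schedule \<alpha> \<pi>) (TMach j q) \<le> 2"
proof -
  let ?B = "if q = (if \<alpha> j then 0 else 1) then {TJob j} else {VJob j (2 * q), VJob j (2 * q + 1)}"
  have on_TMach: "x \<in> ?B" if "x \<in> red_jobs n m" "truth_schedule \<alpha> \<pi> x = TMach j q" for x
  proof (cases x)
    case (VJob j' t)
    with that assms show ?thesis by (auto simp: truth_schedule_def split: if_splits)
  qed (use that in \<open>auto simp: truth_schedule_def\<close>)
  then have "load (red_jobs n m) (red_size m) (truth_schedule \<alpha> \<pi>) (TMach j q) \<le> sum (red_size m) ?B"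
    by (intro load_le_sum) (simp, use on_TMach in blast)
  then show ?thesis by (simp split: if_splits)
qed

lemma load_CMach_truth_schedule:
  assumes "i < 2 * m" "s < 3"
    and bij: "bij_betw (\<pi> i) {..<3} {..<3}"
    and small: "\<forall>s' < 3. lit_true \<alpha> (lit i (\<pi> i s')) \<longleftrightarrow> red_size m (CJob i s') = 1"
  shows "load (red_jobs n m) (red_size m) (truth_schedule \<alpha> \<pi>) (CMach i s) \<le> 2"
proof -
  obtain s' where s': "s' < 3" "\<pi> i s' = s"
    using bij_betw_imp_surj_on[OF bij] \<open>s < 3\<close> by (metis imageE lessThan_iff)
  obtain j t where jt: "j < n" "t < 4" "\<kappa> j t = (i, s)"
    using assms(1,2) by (rule kappa_surj)
  let ?B = "insert (CJob i s') (if lit_true \<alpha> (lit i s) then {VJob j t} else {})"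
  have on_CMach: "x \<in> ?B" if "x \<in> red_jobs n m" "truth_schedule \<alpha> \<pi> x = CMach i s" for x
  proof (cases x)
    case (CJob i' s'')
    with that have "i' = i" "s'' < 3" "\<pi> i s'' = s" by (auto simp: truth_schedule_def)
    then have "s'' = s'"
      using bij_betw_imp_inj_on[OF bij] s' by (auto simp: inj_on_def)
    then show ?thesis using CJob \<open>i' = i\<close> by simp
  next
    case (VJob j' t')
    with that have "j' < n" "t' < 4" "\<alpha> j' = (t' < 2)" "\<kappa> j' t' = (i, s)"
      by (auto simp: truth_schedule_def prod_eq_iff split: if_splits)
    moreover from this have "j' = j \<and> t' = t" using jt kappa_inj by metis
    ultimately show ?thesis using VJob lit_true_kappa[of j' t' \<alpha>] by simp
  qed (use that in \<open>auto simp: truth_schedule_def\<close>)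
  have "load (red_jobs n m) (red_size m) (truth_schedule \<alpha> \<pi>) (CMach i s) \<le> sum (red_size m) ?B"
    by (intro load_le_sum) (simp, use on_CMach in blast)
  also have "\<dots> = red_size m (CJob i s') + (if lit_true \<alpha> (lit i s) then 1 else 0)"
    by simp
  also have "\<dots> \<le> 2"
    using small s' by auto
  finally show ?thesis .
qed

lemma clause_placement:
  assumes "satisfies m lit \<alpha>" "i < 2 * m"
  obtains \<pi> where "bij_betw \<pi> {..<3} {..<3}"
    "\<forall>s' < 3. lit_true \<alpha> (lit i (\<pi> s')) \<longleftrightarrow> red_size m (CJob i s') = 1"
proof -
  let ?small = "{s'. s' < 3 \<and> red_size m (CJob i s') = 1}"
  let ?true = "{s. s < 3 \<and> lit_true \<alpha> (lit i s)}"
  have card_eq: "card ?small = card ?true"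
    using assms card_small_clause_jobs unfolding satisfies_iff_clause_demand num_true_def by simp
  obtain \<pi> where \<pi>: "bij_betw \<pi> {..<3} {..<3}"
    "\<And>s'. s' \<in> {..<3} \<Longrightarrow> \<pi> s' \<in> ?true \<longleftrightarrow> s' \<in> ?small"
    by (rule bij_betw_respecting_subsets[where A = "{..<3}" and B = "{..<3}", OF _ _ _ _ _ card_eq])
      auto
  have "\<pi> s' < 3" if "s' < 3" for s'
    using bij_betwE[OF \<pi>(1)] that by auto
  with \<pi>(2) have "\<forall>s' < 3. lit_true \<alpha> (lit i (\<pi> s')) \<longleftrightarrow> red_size m (CJob i s') = 1"
    by auto
  with \<pi>(1) show ?thesis by (rule that)
qed

lemma schedule_of_satisfying:
  assumes "satisfies m lit \<alpha>"
  obtains \<sigma> where "is_schedule (red_jobs n m) (red_elig \<kappa>) \<sigma>"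
    "\<forall>k \<in> red_machines n m. load (red_jobs n m) (red_size m) \<sigma> k \<le> 2"
proof -
  have "\<forall>i \<in> {..<2 * m}. \<exists>\<pi>. bij_betw \<pi> {..<3} {..<3} \<and>
      (\<forall>s' < 3. lit_true \<alpha> (lit i (\<pi> s')) \<longleftrightarrow> red_size m (CJob i s') = 1)"
    using clause_placement[OF assms] by (metis lessThan_iff)
  from bchoice[OF this] obtain \<pi> where \<pi>: "\<forall>i \<in> {..<2 * m}. bij_betw (\<pi> i) {..<3} {..<3} \<and>
      (\<forall>s' < 3. lit_true \<alpha> (lit i (\<pi> i s')) \<longleftrightarrow> red_size m (CJob i s') = 1)"
    by blast
  have "is_schedule (red_jobs n m) (red_elig \<kappa>) (truth_schedule \<alpha> \<pi>)"
    using \<pi> by (intro is_schedule_truth_schedule) (auto dest: bij_betwE)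
  moreover have "\<forall>k \<in> red_machines n m. load (red_jobs n m) (red_size m) (truth_schedule \<alpha> \<pi>) k \<le> 2"
    using load_TMach_truth_schedule load_CMach_truth_schedule \<pi>
    unfolding red_machines_def by auto
  ultimately show ?thesis by (rule that)
qed

lemma variable_job_of_true_occurrence:
  assumes sched: "is_schedule (red_jobs n m) (red_elig \<kappa>) \<sigma>"
    and loads: "\<forall>k \<in> red_machines n m. load (red_jobs n m) (red_size m) \<sigma> k \<le> 2"
    and jt: "j < n" "t < 4" and true: "(\<sigma> (TJob j) = TMach j 0) = (t < 2)"
  shows "\<sigma> (VJob j t) = CMach (fst (\<kappa> j t)) (snd (\<kappa> j t))"
proof -
  have "\<sigma> (TJob j) \<in> {TMach j 0, TMach j 1}"
    using is_scheduleD[OF sched, of "TJob j"] jt by simp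
  with true jt(2) have TJob: "\<sigma> (TJob j) = TMach j (t div 2)"
    by auto
  have VJob: "\<sigma> (VJob j t) \<in> {TMach j (t div 2), CMach (fst (\<kappa> j t)) (snd (\<kappa> j t))}"
    using is_scheduleD[OF sched, of "VJob j t"] jt by simp
  have "\<sigma> (VJob j t) \<noteq> TMach j (t div 2)"
  proof
    assume "\<sigma> (VJob j t) = TMach j (t div 2)"
    then have "red_size m (TJob j) + red_size m (VJob j t)
        \<le> load (red_jobs n m) (red_size m) \<sigma> (TMach j (t div 2))"
      using TJob jt by (intro load_ge_two_jobs[OF finite_red_jobs]) auto
    moreover have "TMach j (t div 2) \<in> red_machines n m" using jt by simp
    ultimately show False using loads by fastforce
  qed
  with VJob show ?thesis by simp
qed

lemma num_true_le_clause_demand: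
  assumes sched: "is_schedule (red_jobs n m) (red_elig \<kappa>) \<sigma>"
    and loads: "\<forall>k \<in> red_machines n m. load (red_jobs n m) (red_size m) \<sigma> k \<le> 2"
    and "i < 2 * m"
  shows "num_true lit (\<lambda>j. \<sigma> (TJob j) = TMach j 0) i \<le> clause_demand m i"
proof -
  define \<alpha> where "\<alpha> j = (\<sigma> (TJob j) = TMach j 0)" for j
  define Occ where "Occ = {(j, t). j < n \<and> t < 4 \<and> \<alpha> j = (t < 2) \<and> fst (\<kappa> j t) = i}"
  define C where "C = CJob i ` {..<3}"
  define V where "V = case_prod VJob ` Occ"
  have "sum (red_size m) (C \<union> V) \<le> card (CMach i ` {..<3}) * 2"
  proof (rule sum_le_card_mult_load_bound[OF finite_red_jobs])
    show "C \<union> V \<subseteq> red_jobs n m"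
      using \<open>i < 2 * m\<close> unfolding C_def V_def Occ_def by auto
    have "\<sigma> (CJob i s) \<in> CMach i ` {..<3}" if "s < 3" for s
      using is_scheduleD[OF sched, of "CJob i s"] that \<open>i < 2 * m\<close> by auto
    moreover have "\<sigma> (VJob j t) \<in> CMach i ` {..<3}" if "(j, t) \<in> Occ" for j t
    proof -
      from that have "j < n" "t < 4" "\<alpha> j = (t < 2)" "fst (\<kappa> j t) = i"
        unfolding Occ_def by auto
      then show ?thesis
        using variable_job_of_true_occurrence[OF sched loads] kappa_in_range
        unfolding \<alpha>_def by fastforce
    qed
    ultimately show "\<sigma> ` (C \<union> V) \<subseteq> CMach i ` {..<3}"
      unfolding C_def V_def by auto
    show "\<forall>k \<in> CMach i ` {..<3}. load (red_jobs n m) (red_size m) \<sigma> k \<le> 2"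
      using loads \<open>i < 2 * m\<close> by auto
  qed simp
  moreover have "sum (red_size m) (C \<union> V) = (\<Sum>s<3. red_size m (CJob i s)) + num_true lit \<alpha> i"
  proof -
    have "finite Occ"
      unfolding Occ_def by (rule finite_subset[of _ "{..<n} \<times> {..<4}"]) auto
    then have "sum (red_size m) (C \<union> V) = sum (red_size m) C + sum (red_size m) V"
      unfolding C_def V_def by (intro sum.union_disjoint) auto
    also have "sum (red_size m) C = (\<Sum>s<3. red_size m (CJob i s))"
      unfolding C_def by (simp add: sum.reindex inj_on_def)
    also have "sum (red_size m) V = (\<Sum>x\<in>V. 1)"
      unfolding V_def by (intro sum.cong) auto
    also have "\<dots> = card Occ"
      unfolding V_def by (simp, intro card_image) (auto simp: inj_on_def)
    also have "card Occ = num_true lit \<alpha> i"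
      unfolding Occ_def using \<open>i < 2 * m\<close> by (rule card_true_occurrences_in_clause)
    finally show ?thesis .
  qed
  moreover have "card (CMach i ` {..<3}) = 3"
    by (simp add: card_image inj_on_def)
  ultimately have "num_true lit \<alpha> i \<le> clause_demand m i"
    using sum_red_size_CJob[of m i] by linarith
  then show ?thesis unfolding \<alpha>_def .
qed

lemma satisfying_of_schedule:
  assumes "is_schedule (red_jobs n m) (red_elig \<kappa>) \<sigma>"
    and "\<forall>k \<in> red_machines n m. load (red_jobs n m) (red_size m) \<sigma> k \<le> 2"
  shows "satisfies m lit (\<lambda>j. \<sigma> (TJob j) = TMach j 0)"
  unfolding satisfies_iff_num_true_le using num_true_le_clause_demand[OF assms] by blast

end

theorem lemma8:
  fixes n m :: nat and lit :: "nat \<Rightarrow> nat \<Rightarrow> nat \<times> bool" and \<kappa> :: "nat \<Rightarrow> nat \<Rightarrow> nat \<times> nat"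
  assumes "sat3_star_instance n m lit"
    and "is_kappa n m lit \<kappa>"
  shows "(\<exists>\<alpha>. satisfies m lit \<alpha>) \<longleftrightarrow>
         (\<exists>\<sigma>. is_schedule (red_jobs n m) (red_elig \<kappa>) \<sigma> \<and>
               makespan (red_machines n m) (red_jobs n m) (red_size m) \<sigma> \<le> 2)"
proof -
  interpret occurrence_map n m lit \<kappa>
    using assms(2) by unfold_locales
  have makespan_iff: "makespan (red_machines n m) (red_jobs n m) (red_size m) \<sigma> \<le> 2 \<longleftrightarrow>
      (\<forall>k \<in> red_machines n m. load (red_jobs n m) (red_size m) \<sigma> k \<le> 2)" for \<sigma>
    by (rule makespan_le_iff[OF finite_red_machines])
  show ?thesis
  proof
    assume "\<exists>\<alpha>. satisfies m lit \<alpha>"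
    then obtain \<alpha> where "satisfies m lit \<alpha>" ..
    then obtain \<sigma> where "is_schedule (red_jobs n m) (red_elig \<kappa>) \<sigma>"
      "\<forall>k \<in> red_machines n m. load (red_jobs n m) (red_size m) \<sigma> k \<le> 2"
      by (rule schedule_of_satisfying)
    then show "\<exists>\<sigma>. is_schedule (red_jobs n m) (red_elig \<kappa>) \<sigma> \<and>
        makespan (red_machines n m) (red_jobs n m) (red_size m) \<sigma> \<le> 2"
      unfolding makespan_iff by blast
  next
    assume "\<exists>\<sigma>. is_schedule (red_jobs n m) (red_elig \<kappa>) \<sigma> \<and>
        makespan (red_machines n m) (red_jobs n m) (red_size m) \<sigma> \<le> 2"
    then show "\<exists>\<alpha>. satisfies m lit \<alpha>"
      unfolding makespan_iff by (blast dest: satisfying_of_schedule)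
  qed
qed

end
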